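(* Let $m$ and $d$ be positive integers with $m\ge3$. There exist a positive integer $N=N(m,d)$ and a block $B=(b_1,\ldots,b_N)\in\{0,1,\ldots,m-1\}^N$ such that for any real polynomial $P$ of degree $d$ and any sequence $(\eta_n)_n$ of real numbers with $|\eta_n|\le 1/20$ for all $n$, there exists $n\in[1,N]$ such that \[\lfloor P(n)+\eta_n\rfloor\not\equiv b_n\pmod m.\] *)

theory Defs
  imports Complex_Main "HOL-Computational_Algebra.Polynomial" "HOL-Number_Theory.Cong"
begin

end

theory Submission
  imports Defs "HOL-Real_Asymp.Real_Asymp" "HOL-Library.FuncSet"
begin

(* Reduce the coefficients of P modulo m and round them down to the grid (1/K)Z, where
   K = 20(d+1)N^d.  On 1 <= n <= N this changes P(n) by an integer multiple of m plus an
   error in [0, 1/20], so floor(P(n) + eta_n) is congruent to c_n or c_n + 1 modulo m, where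
   c_n = floor(Q(n) - 1/20) only depends on one of the (mK)^(d+1) grid polynomials Q.
   Hence at most (mK)^(d+1) 2^N of the m^N blocks of length N are realised, and since m >= 3
   this count is smaller than m^N once N is large. *)

lemma eventually_poly_mult_2_pow_less_pow:
  fixes c k m :: nat
  assumes "3 \<le> m"
  shows "eventually (\<lambda>n. c * n ^ k * 2 ^ n < m ^ n) sequentially"
proof -
  have "(\<lambda>n. real c * real n ^ k * (2/3) ^ n) \<longlonglongrightarrow> 0"
    by real_asymp
  then have "eventually (\<lambda>n. real c * real n ^ k * (2/3) ^ n < 1) sequentially"
    by (rule order_tendstoD) simp
  then show ?thesis
  proof (rule eventually_mono)
    fix n :: nat
    assume "real c * real n ^ k * (2/3) ^ n < 1"
    then have "real c * real n ^ k * 2 ^ n < 3 ^ n"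
      by (simp add: power_divide field_simps)
    also have "(3::real) ^ n \<le> real m ^ n"
      using assms by (intro power_mono) auto
    finally have "real (c * n ^ k * 2 ^ n) < real (m ^ n)"
      by simp
    then show "c * n ^ k * 2 ^ n < m ^ n"
      by (simp only: of_nat_less_iff)
  qed
qed

lemma ex_block_length:
  fixes m d :: nat
  assumes "3 \<le> m"
  shows "\<exists>N\<ge>1. (m * (20 * (d + 1) * N ^ d)) ^ (d + 1) * 2 ^ N < m ^ N"
proof -
  have "eventually (\<lambda>N. (m * (20 * (d + 1))) ^ (d + 1) * N ^ (d * (d + 1)) * 2 ^ N < m ^ N
      \<and> N \<ge> 1) sequentially"
    using eventually_poly_mult_2_pow_less_pow[OF assms] eventually_ge_at_top
    by (rule eventually_conj)
  then obtain N where "(m * (20 * (d + 1))) ^ (d + 1) * N ^ (d * (d + 1)) * 2 ^ N < m ^ N"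
    and "N \<ge> 1"
    by (auto simp: eventually_sequentially)
  moreover have "(m * (20 * (d + 1) * N ^ d)) ^ (d + 1)
      = (m * (20 * (d + 1))) ^ (d + 1) * N ^ (d * (d + 1))"
    by (simp only: power_mult power_mult_distrib)
  ultimately show ?thesis
    by metis
qed

lemma ex_not_in_small_sets:
  assumes "finite G" and "\<And>g. g \<in> G \<Longrightarrow> finite (S g)"
    and "\<And>g. g \<in> G \<Longrightarrow> card (S g) \<le> k" and "card G * k < card A"
  shows "\<exists>a\<in>A. \<forall>g\<in>G. a \<notin> S g"
proof (rule ccontr)
  assume "\<not> ?thesis"
  then have "card A \<le> card (\<Union>g\<in>G. S g)"
    using assms(1,2) by (intro card_mono) auto
  also have "\<dots> \<le> (\<Sum>g\<in>G. card (S g))"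
    using assms(1) by (rule card_UN_le)
  also have "\<dots> \<le> card G * k"
    using assms(3) sum_bounded_above[of G "\<lambda>g. card (S g)" k] by simp
  finally show False
    using assms(4) by simp
qed

definition near_blocks :: "nat \<Rightarrow> nat \<Rightarrow> (nat \<Rightarrow> int) \<Rightarrow> (nat \<Rightarrow> nat) set" where
  "near_blocks m N c = (\<Pi>\<^sub>E n\<in>{1..N}. {nat (c n mod int m), nat ((c n + 1) mod int m)})"

lemma finite_near_blocks: "finite (near_blocks m N c)"
  by (simp add: near_blocks_def finite_PiE)

lemma card_near_blocks_le: "card (near_blocks m N c) \<le> 2 ^ N"
proof -
  have "card (near_blocks m N c)
      = (\<Prod>n\<in>{1..N}. card {nat (c n mod int m), nat ((c n + 1) mod int m)})"
    by (simp add: near_blocks_def card_PiE)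
  also have "\<dots> \<le> (\<Prod>n\<in>{1..N}. 2)"
    by (intro prod_mono) (auto simp: card_insert_if)
  finally show ?thesis
    by simp
qed

lemma near_blocksI:
  assumes "b \<in> (\<Pi>\<^sub>E n\<in>{1..N}. {..<m})"
    and "\<And>n. n \<in> {1..N} \<Longrightarrow> [c n = int (b n)] (mod int m) \<or> [c n + 1 = int (b n)] (mod int m)"
  shows "b \<in> near_blocks m N c"
  unfolding near_blocks_def PiE_iff
proof (intro conjI ballI)
  fix n
  assume n: "n \<in> {1..N}"
  then have "b n < m"
    using assms(1) by (auto simp: PiE_iff)
  then have "int (b n) mod int m = int (b n)"
    by simp
  with assms(2)[OF n] have "c n mod int m = int (b n) \<or> (c n + 1) mod int m = int (b n)"
    by (auto simp: Cong.cong_def)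
  then show "b n \<in> {nat (c n mod int m), nat ((c n + 1) mod int m)}"
    by auto
qed (use assms(1) in \<open>auto simp: PiE_iff\<close>)

lemma ex_block_not_in_near_blocks:
  fixes c :: "'a \<Rightarrow> nat \<Rightarrow> int"
  assumes "finite G" and "card G * 2 ^ N < m ^ N"
  shows "\<exists>b\<in>(\<Pi>\<^sub>E n\<in>{1..N}. {..<m}). \<forall>g\<in>G. b \<notin> near_blocks m N (c g)"
proof (rule ex_not_in_small_sets)
  show "card G * 2 ^ N < card (\<Pi>\<^sub>E n\<in>{1..N}. {..<m})"
    using assms(2) by (simp add: card_PiE)
qed (use assms(1) finite_near_blocks card_near_blocks_le in auto)

definition grid_poly :: "nat \<Rightarrow> nat \<Rightarrow> (nat \<Rightarrow> nat) \<Rightarrow> real poly" where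
  "grid_poly d K g = (\<Sum>i\<le>d. monom (real (g i) / real K) i)"

lemma ex_grid_approx_mod:
  fixes a :: real and m K :: nat
  assumes "0 < m" and "0 < K"
  shows "\<exists>t::int. \<exists>j<m * K. 0 \<le> a - real m * t - real j / real K
    \<and> a - real m * t - real j / real K < 1 / real K"
proof -
  define z where "z = \<lfloor>real K * a\<rfloor>"
  define t where "t = z div int (m * K)"
  define j where "j = nat (z mod int (m * K))"
  have "0 < m * K"
    using assms by simp
  then have z_eq: "z = int (m * K) * t + int j" and "j < m * K"
    unfolding t_def j_def by (simp_all add: nat_less_iff)
  have e_eq: "a - real m * t - real j / real K = (real K * a - z) / real K"
    using assms(2) by (simp add: z_eq field_simps)
  have "0 \<le> real K * a - z" "real K * a - z < 1"
    unfolding z_def by linarith+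
  then have "0 \<le> a - real m * t - real j / real K" "a - real m * t - real j / real K < 1 / real K"
    unfolding e_eq using assms(2) by (simp_all add: divide_strict_right_mono)
  with \<open>j < m * K\<close> show ?thesis
    by blast
qed

lemma poly_near_grid_poly_mod:
  fixes P :: "real poly" and m K d :: nat
  assumes "0 < m" and "0 < K" and "degree P \<le> d"
  shows "\<exists>g\<in>(\<Pi>\<^sub>E i\<in>{..d}. {..<m * K}). \<forall>x::nat. \<exists>t::int.
    0 \<le> poly P x - poly (grid_poly d K g) x - real m * t
    \<and> poly P x - poly (grid_poly d K g) x - real m * t \<le> (\<Sum>i\<le>d. real x ^ i) / real K"
proof -
  have "\<forall>i. \<exists>t::int. \<exists>j<m * K. 0 \<le> coeff P i - real m * t - real j / real K
      \<and> coeff P i - real m * t - real j / real K < 1 / real K"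
    using ex_grid_approx_mod[OF assms(1,2)] by blast
  then obtain t :: "nat \<Rightarrow> int" and j where j: "\<And>i. j i < m * K"
    and err: "\<And>i. 0 \<le> coeff P i - real m * t i - real (j i) / real K"
      "\<And>i. coeff P i - real m * t i - real (j i) / real K < 1 / real K"
    by metis
  define g where "g = restrict j {..d}"
  have "g \<in> (\<Pi>\<^sub>E i\<in>{..d}. {..<m * K})"
    using j by (simp add: g_def)
  moreover have "\<exists>t'::int. 0 \<le> poly P x - poly (grid_poly d K g) x - real m * t'
      \<and> poly P x - poly (grid_poly d K g) x - real m * t' \<le> (\<Sum>i\<le>d. real x ^ i) / real K"
    for x :: nat
  proof (intro exI conjI)
    define e where "e i = coeff P i - real m * t i - real (j i) / real K" for i
    have "poly P x = (\<Sum>i\<le>d. coeff P i * real x ^ i)"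
      by (subst poly_as_sum_of_monoms'[OF assms(3), symmetric]) (simp add: poly_sum poly_monom)
    then have "poly P x - poly (grid_poly d K g) x - real m * (\<Sum>i\<le>d. t i * int x ^ i)
        = (\<Sum>i\<le>d. e i * real x ^ i)"
      by (simp add: grid_poly_def g_def e_def poly_sum poly_monom sum_distrib_left
          sum_subtractf[symmetric] algebra_simps)
    moreover have "(\<Sum>i\<le>d. e i * real x ^ i) \<le> (\<Sum>i\<le>d. 1 / real K * real x ^ i)"
      using err(2) by (intro sum_mono mult_right_mono) (auto simp: e_def less_imp_le)
    moreover have "0 \<le> (\<Sum>i\<le>d. e i * real x ^ i)"
      using err(1) by (intro sum_nonneg) (simp add: e_def)
    ultimately show "0 \<le> poly P x - poly (grid_poly d K g) x - real m * (\<Sum>i\<le>d. t i * int x ^ i)"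
      "poly P x - poly (grid_poly d K g) x - real m * (\<Sum>i\<le>d. t i * int x ^ i)
        \<le> (\<Sum>i\<le>d. real x ^ i) / real K"
      by (simp_all add: sum_divide_distrib)
  qed
  ultimately show ?thesis
    by blast
qed

lemma floor_eq_or_eq_plus_one:
  fixes x y :: real
  assumes "y \<le> x" and "x < y + 1"
  shows "\<lfloor>x\<rfloor> = \<lfloor>y\<rfloor> \<or> \<lfloor>x\<rfloor> = \<lfloor>y\<rfloor> + 1"
  using assms by linarith

lemma floor_poly_cong_grid_poly:
  fixes P :: "real poly" and \<eta> :: "nat \<Rightarrow> real" and m K d N :: nat
  assumes "0 < m" and "0 < K" and "20 * (d + 1) * N ^ d \<le> K"
    and "degree P \<le> d" and "\<forall>n. \<bar>\<eta> n\<bar> \<le> 1/20"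
  shows "\<exists>g\<in>(\<Pi>\<^sub>E i\<in>{..d}. {..<m * K}). \<forall>n\<in>{1..N}.
    [\<lfloor>poly P n + \<eta> n\<rfloor> = \<lfloor>poly (grid_poly d K g) n - 1/20\<rfloor>] (mod int m) \<or>
    [\<lfloor>poly P n + \<eta> n\<rfloor> = \<lfloor>poly (grid_poly d K g) n - 1/20\<rfloor> + 1] (mod int m)"
proof -
  obtain g where g: "g \<in> (\<Pi>\<^sub>E i\<in>{..d}. {..<m * K})"
    and near: "\<And>x::nat. \<exists>t::int. 0 \<le> poly P x - poly (grid_poly d K g) x - real m * t
      \<and> poly P x - poly (grid_poly d K g) x - real m * t \<le> (\<Sum>i\<le>d. real x ^ i) / real K"
    using poly_near_grid_poly_mod[OF assms(1,2,4)] by blast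
  have "[\<lfloor>poly P n + \<eta> n\<rfloor> = \<lfloor>poly (grid_poly d K g) n - 1/20\<rfloor>] (mod int m) \<or>
      [\<lfloor>poly P n + \<eta> n\<rfloor> = \<lfloor>poly (grid_poly d K g) n - 1/20\<rfloor> + 1] (mod int m)"
    if n: "n \<in> {1..N}" for n
  proof -
    define Q where "Q = poly (grid_poly d K g) n"
    obtain t :: int where t: "0 \<le> poly P n - Q - real m * t"
      "poly P n - Q - real m * t \<le> (\<Sum>i\<le>d. real n ^ i) / real K"
      using near unfolding Q_def by blast
    have "(\<Sum>i\<le>d. real n ^ i) \<le> (\<Sum>i\<le>d. real N ^ d)"
      using n by (intro sum_mono order.trans[OF power_increasing power_mono]) auto
    also have "\<dots> = real (20 * (d + 1) * N ^ d) / 20"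
      by simp
    also have "\<dots> \<le> real K / 20"
      using assms(3) by (intro divide_right_mono) (simp_all only: of_nat_le_iff)
    finally have "(\<Sum>i\<le>d. real n ^ i) \<le> real K / 20" .
    then have "(\<Sum>i\<le>d. real n ^ i) / real K \<le> 1/20"
      using assms(2) by (simp add: field_simps)
    with t(2) have "poly P n - Q - real m * t \<le> 1/20"
      by linarith
    moreover have "-1/20 \<le> \<eta> n" "\<eta> n \<le> 1/20"
      using assms(5)[rule_format, of n] by (auto simp: abs_le_iff)
    ultimately have "\<lfloor>poly P n + \<eta> n - real_of_int (int m * t)\<rfloor> = \<lfloor>Q - 1/20\<rfloor>
        \<or> \<lfloor>poly P n + \<eta> n - real_of_int (int m * t)\<rfloor> = \<lfloor>Q - 1/20\<rfloor> + 1"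
      using t(1) by (intro floor_eq_or_eq_plus_one) simp_all
    moreover have "[\<lfloor>poly P n + \<eta> n\<rfloor> = \<lfloor>poly P n + \<eta> n - real_of_int (int m * t)\<rfloor>] (mod int m)"
      by (simp only: floor_diff_of_int) (simp add: cong_iff_dvd_diff)
    ultimately show ?thesis
      unfolding Q_def by (metis cong_trans)
  qed
  with g show ?thesis
    by blast
qed

lemma realised_block_in_near_blocks:
  fixes P :: "real poly" and \<eta> :: "nat \<Rightarrow> real" and m K d N :: nat
  assumes "0 < m" and "0 < K" and "20 * (d + 1) * N ^ d \<le> K"
    and "degree P \<le> d" and "\<forall>n. \<bar>\<eta> n\<bar> \<le> 1/20"
    and b: "b \<in> (\<Pi>\<^sub>E n\<in>{1..N}. {..<m})"
    and b_cong: "\<And>n. n \<in> {1..N} \<Longrightarrow> [\<lfloor>poly P n + \<eta> n\<rfloor> = int (b n)] (mod int m)"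
  shows "\<exists>g\<in>(\<Pi>\<^sub>E i\<in>{..d}. {..<m * K}).
    b \<in> near_blocks m N (\<lambda>n. \<lfloor>poly (grid_poly d K g) n - 1/20\<rfloor>)"
proof -
  define c where "c g = (\<lambda>n::nat. \<lfloor>poly (grid_poly d K g) n - 1/20\<rfloor>)" for g
  obtain g where "g \<in> (\<Pi>\<^sub>E i\<in>{..d}. {..<m * K})" and g_cong: "\<And>n. n \<in> {1..N} \<Longrightarrow>
      [\<lfloor>poly P n + \<eta> n\<rfloor> = c g n] (mod int m) \<or> [\<lfloor>poly P n + \<eta> n\<rfloor> = c g n + 1] (mod int m)"
    using floor_poly_cong_grid_poly[OF assms(1-5)] unfolding c_def by blast
  moreover have "b \<in> near_blocks m N (c g)"
  proof (rule near_blocksI[OF b])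
    fix n
    assume "n \<in> {1..N}"
    with g_cong b_cong show "[c g n = int (b n)] (mod int m) \<or> [c g n + 1 = int (b n)] (mod int m)"
      by (metis cong_sym cong_trans)
  qed
  ultimately show ?thesis
    unfolding c_def by blast
qed

theorem theorem6:
  fixes m d :: nat
  assumes "m \<ge> 3" and "d \<ge> 1"
  shows "\<exists>N::nat. N \<ge> 1 \<and> (\<exists>b :: nat \<Rightarrow> nat. (\<forall>n\<in>{1..N}. b n < m) \<and>
           (\<forall>(P :: real poly) (\<eta> :: nat \<Rightarrow> real).
              degree P = d \<longrightarrow> (\<forall>n. \<bar>\<eta> n\<bar> \<le> 1/20) \<longrightarrow>
              (\<exists>n\<in>{1..N}. \<not> [\<lfloor>poly P (real n) + \<eta> n\<rfloor> = int (b n)] (mod int m))))"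
proof -
  obtain N where "N \<ge> 1" and few: "(m * (20 * (d + 1) * N ^ d)) ^ (d + 1) * 2 ^ N < m ^ N"
    using ex_block_length[OF assms(1)] by blast
  define K where "K = 20 * (d + 1) * N ^ d"
  define G where "G = (\<Pi>\<^sub>E i\<in>{..d}. {..<m * K})"
  define c where "c g = (\<lambda>n::nat. \<lfloor>poly (grid_poly d K g) n - 1/20\<rfloor>)" for g
  have "finite G" and "card G * 2 ^ N < m ^ N"
    using few by (simp_all add: G_def K_def card_PiE finite_PiE)
  then obtain b where b: "b \<in> (\<Pi>\<^sub>E n\<in>{1..N}. {..<m})"
    and avoids: "\<forall>g\<in>G. b \<notin> near_blocks m N (c g)"
    using ex_block_not_in_near_blocks[of G N m c] by blast
  have "\<exists>n\<in>{1..N}. \<not> [\<lfloor>poly P (real n) + \<eta> n\<rfloor> = int (b n)] (mod int m)"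
    if "degree P = d" and "\<forall>n. \<bar>\<eta> n\<bar> \<le> 1/20" for P \<eta>
  proof (rule ccontr)
    assume "\<not> ?thesis"
    then have b_cong: "\<And>n. n \<in> {1..N} \<Longrightarrow> [\<lfloor>poly P n + \<eta> n\<rfloor> = int (b n)] (mod int m)"
      by blast
    have "0 < m" and "0 < K" and "20 * (d + 1) * N ^ d \<le> K" and "degree P \<le> d"
      using assms(1) \<open>N \<ge> 1\<close> that(1) by (simp_all add: K_def)
    from realised_block_in_near_blocks[OF this that(2) b b_cong]
    have "\<exists>g\<in>G. b \<in> near_blocks m N (c g)"
      unfolding G_def c_def .
    with avoids show False
      by blast
  qed
  with \<open>N \<ge> 1\<close> b show ?thesis
    by auto
qed

end
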